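(* (1) $\mathrm{alpha}$ is an equivalence relation on the set of good quasiterms, and $\mathrm{alphaAbs}$ is an equivalence relation on the set of good quasiabstractions. (2) On good quasiterms and quasiabstractions, the predicates obtained by replacing the abstraction clause in the definition of $\mathrm{alpha}/\mathrm{alphaAbs}$ by $\mathrm{alphaAbs}(\mathrm{qAbs}\;xs\;x\;X)(\mathrm{qAbs}\;xs'\;x'\;X')\iff xs=xs'\wedge\big(\forall y\notin\{x,x'\}.\ \mathrm{qFresh}\;xs\;y\;X\wedge\mathrm{qFresh}\;xs\;y\;X'\Longrightarrow\mathrm{alpha}(X[y\wedge x]_{xs})(X'[y\wedge x']_{xs})\big)$ coincide with $\mathrm{alpha}$ and $\mathrm{alphaAbs}$.
   Context: Fix types $\mathrm{var}$, $\mathrm{varsort}$, $\mathrm{index}$, $\mathrm{bindex}$, $\mathrm{opsym}$. $(\alpha,\beta)\,\mathrm{input}$ is the type of partial functions $\alpha\to\beta\;\mathrm{option}$; $\mathrm{dom}\,f=\{i\mid f\,i\neq\mathrm{None}\}$. For a predicate $P$, $\uparrow P\;inp$ holds iff $P$ holds of all defined values; for a binary relation $P$, $\uparrow P\;inp\;inp'$ holds iff for every $i$ either $inp\;i=inp'\;i=\mathrm{None}$, or $inp\;i=\mathrm{Some}\;b$, $inp'\;i=\mathrm{Some}\;b'$ and $P\;b\;b'$. Quasiterms/quasiabstractions: mutually recursive free datatypes $\mathrm{qterm}=\mathrm{qVar}\;\mathrm{varsort}\;\mathrm{var}\mid\mathrm{qOp}\;\mathrm{opsym}\;((\mathrm{index},\mathrm{qterm})\mathrm{input})\;((\mathrm{bindex},\mathrm{qabs})\mathrm{input})$,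 $\mathrm{qabs}=\mathrm{qAbs}\;\mathrm{varsort}\;\mathrm{var}\;\mathrm{qterm}$ ($x$ bound in $X$ in $\mathrm{qAbs}\;xs\;x\;X$). $\mathrm{qFresh}\;xs\;x\;X$: the variable $x$ of varsort $xs$ does not occur free in $X$. Swapping $X[y\wedge x]_{xs}$: replace every occurrence (free, bound, or binding) of the variable $y$ of varsort $xs$ by $x$ and vice versa. Alpha-equivalence is defined mutually recursively: $\mathrm{alpha}(\mathrm{qVar}\;xs\;x)(\mathrm{qVar}\;xs'\;x')\iff xs=xs'\wedge x=x'$; $\mathrm{alpha}(\mathrm{qOp}\;\delta\;inp\;binp)(\mathrm{qOp}\;\delta'\;inp'\;binp')\iff\delta=\delta'\wedge\uparrow\mathrm{alpha}\;inp\;inp'\wedge\uparrow\mathrm{alphaAbs}\;binp\;binp'$; $\mathrm{alpha}$ is false between a $\mathrm{qVar}$ and a $\mathrm{qOp}$ quasiterm; $\mathrm{alphaAbs}(\mathrm{qAbs}\;xs\;x\;X)(\mathrm{qAbs}\;xs'\;x'\;X')\iff xs=xs'\wedge\exists y\notin\{x,x'\}.\ \mathrm{qFresh}\;xs\;y\;X\wedge\mathrm{qFresh}\;xs\;y\;X'\wedge\mathrm{alpha}(X[y\wedge x]_{xs})(X'[y\wedge x']_{xs})$. Goodness: $\mathrm{qGood}(\mathrm{qVar}\;xs\;x)$; $\mathrm{qGood}(\mathrm{qOp}\;\delta\;inp\;binp)\iff\uparrow\mathrm{qGood}\;inp\wedge\uparrow\mathrm{qGoodAbs}\;binp\wedge|\mathrm{dom}\;inp|<|\mathrm{var}|\wedge|\mathrm{dom}\;binp|<|\mathrm{var}|$;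 $\mathrm{qGoodAbs}(\mathrm{qAbs}\;xs\;x\;X)\iff\mathrm{qGood}\;X$. Standing assumption: $|\mathrm{var}|$ is an infinite regular cardinal. *)

theory Defs
  imports Main
begin

type_synonym ('i, 'b) input = "'i \<Rightarrow> 'b option"

definition liftAll :: "('b \<Rightarrow> bool) \<Rightarrow> ('i, 'b) input \<Rightarrow> bool" where
  "liftAll P inp \<equiv> \<forall>i b. inp i = Some b \<longrightarrow> P b"

definition liftAll2 :: "('b \<Rightarrow> 'c \<Rightarrow> bool) \<Rightarrow> ('i, 'b) input \<Rightarrow> ('i, 'c) input \<Rightarrow> bool" where
  "liftAll2 P inp inp' \<equiv>
     \<forall>i. (inp i = None \<and> inp' i = None) \<or>
         (\<exists>b b'. inp i = Some b \<and> inp' i = Some b' \<and> P b b')"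

lemma liftAll2_mono[mono]: "(\<And>x y. P x y \<longrightarrow> Q x y) \<Longrightarrow> liftAll2 P inp inp' \<longrightarrow> liftAll2 Q inp inp'"
  unfolding liftAll2_def by blast

datatype ('index, 'bindex, 'varSort, 'var, 'opSym) qTerm =
    qVar 'varSort 'var
  | qOp 'opSym "('index, ('index, 'bindex, 'varSort, 'var, 'opSym) qTerm) input"
               "('bindex, ('index, 'bindex, 'varSort, 'var, 'opSym) qAbs) input"
and ('index, 'bindex, 'varSort, 'var, 'opSym) qAbs =
    qAbs 'varSort 'var "('index, 'bindex, 'varSort, 'var, 'opSym) qTerm"

primrec qFresh :: "'varSort \<Rightarrow> 'var \<Rightarrow> ('index, 'bindex, 'varSort, 'var, 'opSym) qTerm \<Rightarrow> bool"
and qFreshAbs :: "'varSort \<Rightarrow> 'var \<Rightarrow> ('index, 'bindex, 'varSort, 'var, 'opSym) qAbs \<Rightarrow> bool" where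
  "qFresh xs x (qVar ys y) = (ys \<noteq> xs \<or> y \<noteq> x)"
| "qFresh xs x (qOp delta inp binp) =
     ((\<forall>i. pred_option (qFresh xs x) (inp i)) \<and> (\<forall>i. pred_option (qFreshAbs xs x) (binp i)))"
| "qFreshAbs xs x (qAbs ys y X) = ((ys = xs \<and> y = x) \<or> qFresh xs x X)"

definition sw :: "'var \<Rightarrow> 'var \<Rightarrow> 'var \<Rightarrow> 'var" where
  "sw x y z \<equiv> (if x = y then z else if x = z then y else x)"

primrec qSwap :: "'varSort \<Rightarrow> 'var \<Rightarrow> 'var \<Rightarrow> ('index, 'bindex, 'varSort, 'var, 'opSym) qTerm \<Rightarrow> ('index, 'bindex, 'varSort, 'var, 'opSym) qTerm"
and qSwapAbs :: "'varSort \<Rightarrow> 'var \<Rightarrow> 'var \<Rightarrow> ('index, 'bindex, 'varSort, 'var, 'opSym) qAbs \<Rightarrow> ('index, 'bindex, 'varSort, 'var, 'opSym) qAbs" where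
  "qSwap zs z1 z2 (qVar xs x) = qVar xs (if xs = zs then sw x z1 z2 else x)"
| "qSwap zs z1 z2 (qOp delta inp binp) =
     qOp delta (map_option (qSwap zs z1 z2) \<circ> inp) (map_option (qSwapAbs zs z1 z2) \<circ> binp)"
| "qSwapAbs zs z1 z2 (qAbs xs x X) = qAbs xs (if xs = zs then sw x z1 z2 else x) (qSwap zs z1 z2 X)"

abbreviation qSwap_abbrev ("_ #[[_ \<and> _]]'__" 200) where
  "X #[[z1 \<and> z2]]_zs \<equiv> qSwap zs z1 z2 X"

primrec qGood :: "('index, 'bindex, 'varSort, 'var, 'opSym) qTerm \<Rightarrow> bool"
and qGoodAbs :: "('index, 'bindex, 'varSort, 'var, 'opSym) qAbs \<Rightarrow> bool" where
  "qGood (qVar xs x) = True"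
| "qGood (qOp delta inp binp) =
     ((\<forall>i. pred_option qGood (inp i)) \<and> (\<forall>i. pred_option qGoodAbs (binp i)) \<and>
      (card_of (dom inp), card_of (UNIV :: 'var set)) \<in> ordLess \<and> (card_of (dom binp), card_of (UNIV :: 'var set)) \<in> ordLess)"
| "qGoodAbs (qAbs xs x X) = qGood X"

lemma qFresh_liftAll[simp]:
  "qFresh xs x (qOp delta inp binp) = (liftAll (qFresh xs x) inp \<and> liftAll (qFreshAbs xs x) binp)"
  by (auto simp: liftAll_def pred_option_def split: option.splits)

inductive alpha :: "('index, 'bindex, 'varSort, 'var, 'opSym) qTerm \<Rightarrow> ('index, 'bindex, 'varSort, 'var, 'opSym) qTerm \<Rightarrow> bool"
and alphaAbs :: "('index, 'bindex, 'varSort, 'var, 'opSym) qAbs \<Rightarrow> ('index, 'bindex, 'varSort, 'var, 'opSym) qAbs \<Rightarrow> bool" where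
  Var: "alpha (qVar xs x) (qVar xs x)"
| Op: "\<lbrakk>liftAll2 alpha inp inp'; liftAll2 alphaAbs binp binp'\<rbrakk> \<Longrightarrow>
        alpha (qOp delta inp binp) (qOp delta inp' binp')"
| Abs: "\<lbrakk>y \<notin> {x, x'}; qFresh xs y X; qFresh xs y X';
         alpha (X #[[y \<and> x]]_xs) (X' #[[y \<and> x']]_xs)\<rbrakk> \<Longrightarrow>
        alphaAbs (qAbs xs x X) (qAbs xs x' X')"

definition swapsAll ::
  "(('index, 'bindex, 'varSort, 'var, 'opSym) qTerm \<Rightarrow> ('index, 'bindex, 'varSort, 'var, 'opSym) qTerm \<Rightarrow> bool)
   \<Rightarrow> 'varSort \<Rightarrow> 'var \<Rightarrow> ('index, 'bindex, 'varSort, 'var, 'opSym) qTerm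
   \<Rightarrow> 'var \<Rightarrow> ('index, 'bindex, 'varSort, 'var, 'opSym) qTerm \<Rightarrow> bool" where
  "swapsAll R xs x X x' X' \<equiv>
     \<forall>y. y \<notin> {x, x'} \<and> qFresh xs y X \<and> qFresh xs y X' \<longrightarrow>
         R (X #[[y \<and> x]]_xs) (X' #[[y \<and> x']]_xs)"

lemma swapsAll_mono[mono]: "(\<And>x y. R x y \<longrightarrow> S x y) \<Longrightarrow> swapsAll R xs x X x' X' \<longrightarrow> swapsAll S xs x X x' X'"
  unfolding swapsAll_def by blast

inductive alphaAll :: "('index, 'bindex, 'varSort, 'var, 'opSym) qTerm \<Rightarrow> ('index, 'bindex, 'varSort, 'var, 'opSym) qTerm \<Rightarrow> bool"
and alphaAllAbs :: "('index, 'bindex, 'varSort, 'var, 'opSym) qAbs \<Rightarrow> ('index, 'bindex, 'varSort, 'var, 'opSym) qAbs \<Rightarrow> bool" where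
  Var: "alphaAll (qVar xs x) (qVar xs x)"
| Op: "\<lbrakk>liftAll2 alphaAll inp inp'; liftAll2 alphaAllAbs binp binp'\<rbrakk> \<Longrightarrow>
        alphaAll (qOp delta inp binp) (qOp delta inp' binp')"
| Abs: "swapsAll alphaAll xs x X x' X' \<Longrightarrow>
        alphaAllAbs (qAbs xs x X) (qAbs xs x' X')"

end

theory Submission
  imports Defs
begin

text \<open>
  Everything rests on the availability of fresh variables: since the cardinality of the variables
  is infinite and regular, and a good quasiterm branches into fewer than that many subterms, a good
  quasiterm has fewer non-fresh variables than there are variables.

  The abstraction clause of alpha compares swapped bodies, so reflexivity and
  transitivity are proved by an induction whose hypothesis for an abstraction body covers all its
  swap-variants. The crucial fact is that the fresh variable in the abstraction clause can be
  exchanged: if \<open>X[y \<and> x] \<sim> X'[y \<and> x']\<close> and \<open>z\<close> is also fresh, then swapping \<open>z\<close> and \<open>y\<close>, which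
  leaves \<open>X\<close> and \<open>X'\<close> unchanged up to alpha, yields \<open>X[z \<and> x] \<sim> X'[z \<and> x']\<close>. This gives
  transitivity, and it shows that on good quasiterms the existential and the universal
  abstraction clauses agree.
\<close>

unbundle cardinal_syntax

lemma qTerm_qAbs_induct[case_names Var Op Abs]:
  fixes X :: "('i, 'b, 'vs, 'v, 'o) qTerm" and A :: "('i, 'b, 'vs, 'v, 'o) qAbs"
  assumes Var: "\<And>xs x. P (qVar xs x)"
    and Op: "\<And>delta inp binp. (\<And>i X. inp i = Some X \<Longrightarrow> P X) \<Longrightarrow>
               (\<And>i A. binp i = Some A \<Longrightarrow> Q A) \<Longrightarrow> P (qOp delta inp binp)"
    and Abs: "\<And>xs x X. P X \<Longrightarrow> Q (qAbs xs x X)"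
  shows "P X" and "Q A"
proof -
  have "P X \<and> Q A"
    by (rule qTerm_qAbs.induct)
       (use Var Abs in blast, metis Op option.set_intros rangeI, use Abs in blast)
  then show "P X" "Q A" by auto
qed

lemma map_option_comp_cong:
  "(\<And>i Y. inp i = Some Y \<Longrightarrow> f Y = g Y) \<Longrightarrow> map_option f \<circ> inp = map_option g \<circ> inp"
  by (auto simp: fun_eq_iff intro!: option.map_cong0)

lemma map_option_comp_ident:
  "(\<And>i Y. inp i = Some Y \<Longrightarrow> f Y = Y) \<Longrightarrow> map_option f \<circ> inp = inp"
  by (auto simp: fun_eq_iff intro!: option.map_ident_strong)

lemma map_option_comp_comp:
  "map_option f \<circ> (map_option g \<circ> inp) = map_option (f \<circ> g) \<circ> inp"
  by (auto simp: fun_eq_iff option.map_comp)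

lemma liftAll_map_option[simp]: "liftAll P (map_option f \<circ> inp) = liftAll (\<lambda>Y. P (f Y)) inp"
  by (auto simp: liftAll_def)

lemma liftAll_cong: "(\<And>i Y. inp i = Some Y \<Longrightarrow> P Y = Q Y) \<Longrightarrow> liftAll P inp = liftAll Q inp"
  by (auto simp: liftAll_def)

lemma liftAll2_map_option:
  "liftAll2 P (map_option f \<circ> inp) (map_option g \<circ> inp') = liftAll2 (\<lambda>a b. P (f a) (g b)) inp inp'"
  by (auto simp: liftAll2_def)

lemma liftAll2_mono_on:
  "liftAll2 P inp inp' \<Longrightarrow> (\<And>i a b. inp i = Some a \<Longrightarrow> inp' i = Some b \<Longrightarrow> P a b \<Longrightarrow> Q a b) \<Longrightarrow>
   liftAll2 Q inp inp'"
  unfolding liftAll2_def by metis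

lemma liftAll2_converse: "liftAll2 P inp inp' \<Longrightarrow> liftAll2 (\<lambda>a b. P b a) inp' inp"
  unfolding liftAll2_def by metis

lemma liftAll2_trans_on:
  "liftAll2 P inp inp' \<Longrightarrow> liftAll2 Q inp' inp'' \<Longrightarrow>
   (\<And>i a b c. inp i = Some a \<Longrightarrow> inp' i = Some b \<Longrightarrow> inp'' i = Some c \<Longrightarrow> P a b \<Longrightarrow> Q b c \<Longrightarrow> R a c) \<Longrightarrow>
   liftAll2 R inp inp''"
  unfolding liftAll2_def by (metis option.inject option.simps(3))

lemma liftAll2_refl_on: "(\<And>i a. inp i = Some a \<Longrightarrow> P a a) \<Longrightarrow> liftAll2 P inp inp"
  unfolding liftAll2_def by (metis not_None_eq)

lemma liftAll2_map_option_self: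
  "(\<And>i a. inp i = Some a \<Longrightarrow> P (f a) a) \<Longrightarrow> liftAll2 P (map_option f \<circ> inp) inp"
  unfolding liftAll2_def by (metis comp_apply not_None_eq option.map(1) option.map(2))

lemma liftAll2_cong_on:
  "(\<And>i a b. inp i = Some a \<Longrightarrow> inp' i = Some b \<Longrightarrow> P a b = Q a b) \<Longrightarrow>
   liftAll2 P inp inp' = liftAll2 Q inp inp'"
  unfolding liftAll2_def by (metis option.inject)

lemma sw_sw: "sw (sw v c d) a b = sw (sw v a b) (sw c a b) (sw d a b)"
  unfolding sw_def by auto

lemma sw_involutive[simp]: "sw (sw v a b) a b = v"
  unfolding sw_def by auto

lemma sw_eq_iff[simp]: "sw v a b = sw w a b \<longleftrightarrow> v = w"
  unfolding sw_def by auto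

lemma sw_same[simp]: "sw v a a = v"
  unfolding sw_def by auto

lemma sw_other[simp]: "v \<noteq> a \<Longrightarrow> v \<noteq> b \<Longrightarrow> sw v a b = v"
  unfolding sw_def by auto

lemma sw_left_right[simp]: "sw a a b = b" "sw b a b = a"
  unfolding sw_def by auto

declare qFresh.simps(2)[simp del]

lemma qSwap_qSwap:
  fixes X :: "('i, 'b, 'vs, 'v, 'o) qTerm" and A :: "('i, 'b, 'vs, 'v, 'o) qAbs"
  shows "qSwap zs a b (qSwap zs c d X) = qSwap zs (sw c a b) (sw d a b) (qSwap zs a b X)"
    and "qSwapAbs zs a b (qSwapAbs zs c d A) = qSwapAbs zs (sw c a b) (sw d a b) (qSwapAbs zs a b A)"
  by (induction X and A rule: qTerm_qAbs_induct)
     (auto simp: sw_sw[of _ c d a b] map_option_comp_comp intro!: map_option_comp_cong)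

lemma qSwap_commute:
  fixes X :: "('i, 'b, 'vs, 'v, 'o) qTerm" and A :: "('i, 'b, 'vs, 'v, 'o) qAbs"
  shows "zs \<noteq> zs' \<Longrightarrow> qSwap zs a b (qSwap zs' c d X) = qSwap zs' c d (qSwap zs a b X)"
    and "zs \<noteq> zs' \<Longrightarrow> qSwapAbs zs a b (qSwapAbs zs' c d A) = qSwapAbs zs' c d (qSwapAbs zs a b A)"
  by (induction X and A rule: qTerm_qAbs_induct)
     (auto simp: map_option_comp_comp intro!: map_option_comp_cong)

lemma qSwap_same[simp]:
  fixes X :: "('i, 'b, 'vs, 'v, 'o) qTerm" and A :: "('i, 'b, 'vs, 'v, 'o) qAbs"
  shows "qSwap zs a a X = X" "qSwapAbs zs a a A = A"
  by (induction X and A rule: qTerm_qAbs_induct) (auto intro!: map_option_comp_ident)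

lemma qSwap_qSwap_sorts:
  "qSwap xs (if xs = zs then sw y a b else y) (if xs = zs then sw x a b else x) (qSwap zs a b X)
   = qSwap zs a b (qSwap xs y x X)"
  using qSwap_qSwap(1)[of zs a b y x X] qSwap_commute(1)[of zs xs a b y x X]
  by (cases "xs = zs") auto

lemma qFresh_qSwap[simp]:
  fixes X :: "('i, 'b, 'vs, 'v, 'o) qTerm" and A :: "('i, 'b, 'vs, 'v, 'o) qAbs"
  shows "qFresh xs v (qSwap zs a b X) = qFresh xs (if xs = zs then sw v a b else v) X"
    and "qFreshAbs xs v (qSwapAbs zs a b A) = qFreshAbs xs (if xs = zs then sw v a b else v) A"
proof (induction X and A rule: qTerm_qAbs_induct)
  case (Op delta inp binp)
  then show ?case by (simp cong: liftAll_cong)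
qed (auto simp: sw_def)

declare qGood.simps(2)[simp del]

lemma qGood_qOp[simp]:
  "qGood (qOp delta inp binp) \<longleftrightarrow>
     liftAll qGood inp \<and> liftAll qGoodAbs binp \<and>
     |dom inp| <o |UNIV :: 'var set| \<and> |dom binp| <o |UNIV :: 'var set|"
  for inp :: "('i, ('i, 'b, 'vs, 'var, 'o) qTerm) input"
  by (auto simp: qGood.simps(2) liftAll_def pred_option_def)

lemma qGood_qSwap[simp]:
  fixes X :: "('i, 'b, 'vs, 'v, 'o) qTerm" and A :: "('i, 'b, 'vs, 'v, 'o) qAbs"
  shows "qGood (qSwap zs a b X) = qGood X" "qGoodAbs (qSwapAbs zs a b A) = qGoodAbs A"
proof (induction X and A rule: qTerm_qAbs_induct)
  case (Op delta inp binp)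
  then show ?case by (simp cong: liftAll_cong)
qed auto

fun qSwaps :: "('vs \<times> 'v \<times> 'v) list \<Rightarrow> ('i, 'b, 'vs, 'v, 'o) qTerm \<Rightarrow> ('i, 'b, 'vs, 'v, 'o) qTerm"
  where
    "qSwaps [] X = X"
  | "qSwaps ((zs, a, b) # l) X = qSwap zs a b (qSwaps l X)"

fun qSwapsAbs :: "('vs \<times> 'v \<times> 'v) list \<Rightarrow> ('i, 'b, 'vs, 'v, 'o) qAbs \<Rightarrow> ('i, 'b, 'vs, 'v, 'o) qAbs"
  where
    "qSwapsAbs [] A = A"
  | "qSwapsAbs ((zs, a, b) # l) A = qSwapAbs zs a b (qSwapsAbs l A)"

lemma qSwaps_qVar: "\<exists>y. qSwaps l (qVar xs x) = qVar xs y"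
  by (induction l) auto

lemma qSwaps_qOp:
  "qSwaps l (qOp delta inp binp) = qOp delta (map_option (qSwaps l) \<circ> inp) (map_option (qSwapsAbs l) \<circ> binp)"
  by (induction l) (auto simp: fun_eq_iff option.map_comp option.map_ident intro!: option.map_cong0)

lemma qSwapsAbs_qAbs: "\<exists>y. qSwapsAbs l (qAbs xs x X) = qAbs xs y (qSwaps l X)"
  by (induction l) auto

text \<open>Proved by structural induction on the claim for all iterated swaps, a class closed under
  one more swap.\<close>

lemma qTerm_qAbs_swap_induct[case_names Var Op Abs]:
  fixes X :: "('i, 'b, 'vs, 'v, 'o) qTerm" and A :: "('i, 'b, 'vs, 'v, 'o) qAbs"
  assumes var: "\<And>xs x. P (qVar xs x)"
    and op: "\<And>delta inp binp. (\<And>i X. inp i = Some X \<Longrightarrow> P X) \<Longrightarrow>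
               (\<And>i A. binp i = Some A \<Longrightarrow> Q A) \<Longrightarrow> P (qOp delta inp binp)"
    and abs: "\<And>xs x X. (\<And>zs a b. P (qSwap zs a b X)) \<Longrightarrow> Q (qAbs xs x X)"
  shows "P X" and "Q A"
proof -
  have "\<forall>l. P (qSwaps l X)" and "\<forall>l. Q (qSwapsAbs l A)"
  proof (induction X and A rule: qTerm_qAbs_induct)
    case (Var xs x)
    then show ?case using qSwaps_qVar var by metis
  next
    case (Op delta inp binp)
    show ?case
    proof
      fix l
      show "P (qSwaps l (qOp delta inp binp))"
        unfolding qSwaps_qOp by (rule op) (use Op.IH in auto)
    qed
  next
    case (Abs xs x X)
    show ?case
    proof
      fix l
      have "P (qSwap zs a b (qSwaps l X))" for zs a b
        using Abs.IH[rule_format, of "(zs, a, b) # l"] by simp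
      then have "Q (qAbs xs y (qSwaps l X))" for y
        by (rule abs)
      then show "Q (qSwapsAbs l (qAbs xs x X))" using qSwapsAbs_qAbs by metis
    qed
  qed
  then show "P X" "Q A" using qSwaps.simps(1) qSwapsAbs.simps(1) by metis+
qed

inductive_simps alpha_qVar_iff: "alpha (qVar xs x) Y"
inductive_simps alpha_qOp_iff: "alpha (qOp delta inp binp) Y"
inductive_simps alphaAbs_qAbs_iff: "alphaAbs (qAbs xs x X) (qAbs xs' x' X')"
inductive_simps alphaAll_qVar_iff: "alphaAll (qVar xs x) Y"
inductive_simps alphaAll_qOp_iff: "alphaAll (qOp delta inp binp) Y"
inductive_simps alphaAllAbs_qAbs_iff: "alphaAllAbs (qAbs xs x X) (qAbs xs' x' X')"

lemma alpha_qSwap: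
  fixes X :: "('i, 'b, 'vs, 'v, 'o) qTerm" and A :: "('i, 'b, 'vs, 'v, 'o) qAbs"
  shows "alpha X Y \<Longrightarrow> alpha (qSwap zs a b X) (qSwap zs a b Y)"
    and "alphaAbs A B \<Longrightarrow> alphaAbs (qSwapAbs zs a b A) (qSwapAbs zs a b B)"
proof (induct rule: alpha_alphaAbs.inducts)
  case (Var xs x)
  then show ?case by (auto intro: alpha_alphaAbs.Var)
next
  case (Op inp inp' binp binp' delta)
  show ?case
    unfolding qSwap.simps
    by (intro alpha_alphaAbs.Op; unfold liftAll2_map_option;
        rule liftAll2_mono_on[OF Op(1)] liftAll2_mono_on[OF Op(2)]; simp)
next
  case (Abs y x x' xs X X')
  let ?s = "\<lambda>v. if xs = zs then sw v a b else v"
  show ?case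
  proof (simp only: qSwapAbs.simps, rule alpha_alphaAbs.Abs[of "?s y"])
    show "alpha (qSwap xs (?s y) (?s x) (qSwap zs a b X)) (qSwap xs (?s y) (?s x') (qSwap zs a b X'))"
      unfolding qSwap_qSwap_sorts using Abs by simp
  qed (use Abs in auto)
qed

lemma alpha_sym:
  fixes X :: "('i, 'b, 'vs, 'v, 'o) qTerm" and A :: "('i, 'b, 'vs, 'v, 'o) qAbs"
  shows "alpha X Y \<Longrightarrow> alpha Y X" and "alphaAbs A B \<Longrightarrow> alphaAbs B A"
proof (induct rule: alpha_alphaAbs.inducts)
  case (Op inp inp' binp binp' delta)
  show ?case
    by (intro alpha_alphaAbs.Op liftAll2_mono_on[OF liftAll2_converse[OF Op(1)]]
          liftAll2_mono_on[OF liftAll2_converse[OF Op(2)]]) auto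
qed (auto intro: alpha_alphaAbs.intros)

context
  assumes infinite_var: "infinite (UNIV :: 'v set)"
    and regular_var: "regularCard |UNIV :: 'v set|"
begin

lemma Cinfinite_var: "Cinfinite |UNIV :: 'v set|"
  using infinite_var by (simp add: cinfinite_def Field_card_of card_of_card_order_on)

lemma finite_ordLess_var: "finite S \<Longrightarrow> |S| <o |UNIV :: 'v set|"
  using infinite_var
  by (intro finite_ordLess_infinite card_of_Well_order) (auto simp: Field_card_of)

lemma qGood_nonfresh_ordLess_var:
  fixes X :: "('i, 'b, 'vs, 'v, 'o) qTerm" and A :: "('i, 'b, 'vs, 'v, 'o) qAbs"
  shows "qGood X \<Longrightarrow> |{y. \<not> qFresh xs y X}| <o |UNIV :: 'v set|"
    and "qGoodAbs A \<Longrightarrow> |{y. \<not> qFreshAbs xs y A}| <o |UNIV :: 'v set|"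
proof (induction X and A rule: qTerm_qAbs_induct)
  case (Var ys x)
  have "{y. \<not> qFresh xs y (qVar ys x)} \<subseteq> {x}" by auto
  then show ?case
    using finite_ordLess_var[of "{x}"] card_of_mono1 ordLeq_ordLess_trans by blast
next
  case (Op delta inp binp)
  let ?U = "\<Union>i\<in>dom inp. {y. \<not> qFresh xs y (the (inp i))}"
  let ?V = "\<Union>i\<in>dom binp. {y. \<not> qFreshAbs xs y (the (binp i))}"
  have "|?U| <o |UNIV :: 'v set|" "|?V| <o |UNIV :: 'v set|"
    using Op by (auto simp: liftAll_def
        intro!: card_of_UNION_ordLess_infinite_Field_regularCard[OF regular_var Cinfinite_var])
  then have "|?U \<union> ?V| <o |UNIV :: 'v set|"
    by (rule card_of_Un_ordLess_infinite[OF infinite_var])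
  moreover have "{y. \<not> qFresh xs y (qOp delta inp binp)} \<subseteq> ?U \<union> ?V"
    by (force simp: liftAll_def)
  ultimately show ?case
    using card_of_mono1 ordLeq_ordLess_trans by blast
next
  case (Abs ys x X)
  have "{y. \<not> qFreshAbs xs y (qAbs ys x X)} \<subseteq> {y. \<not> qFresh xs y X}" by auto
  then show ?case
    using Abs card_of_mono1 ordLeq_ordLess_trans by fastforce
qed

lemma exists_fresh:
  fixes Xs :: "('i, 'b, 'vs, 'v, 'o) qTerm list"
  assumes "finite V" and "\<forall>X\<in>set Xs. qGood X"
  shows "\<exists>y. y \<notin> V \<and> (\<forall>X\<in>set Xs. qFresh xs y X)"
proof -
  let ?N = "V \<union> (\<Union>X\<in>set Xs. {y. \<not> qFresh xs y X})"
  have "|\<Union>X\<in>set Xs. {y. \<not> qFresh xs y X}| <o |UNIV :: 'v set|"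
    using assms(2)
    by (intro card_of_UNION_ordLess_infinite_Field_regularCard[OF regular_var Cinfinite_var
          finite_ordLess_var]) (auto intro: qGood_nonfresh_ordLess_var(1))
  then have "|?N| <o |UNIV :: 'v set|"
    by (rule card_of_Un_ordLess_infinite[OF infinite_var finite_ordLess_var[OF assms(1)]])
  then have "?N \<noteq> UNIV"
    using ordLess_irreflexive by metis
  then show ?thesis by auto
qed

lemma alpha_refl:
  fixes X :: "('i, 'b, 'vs, 'v, 'o) qTerm" and A :: "('i, 'b, 'vs, 'v, 'o) qAbs"
  shows "qGood X \<Longrightarrow> alpha X X" and "qGoodAbs A \<Longrightarrow> alphaAbs A A"
proof (induction X and A rule: qTerm_qAbs_swap_induct)
  case (Var xs x)
  show ?case by (rule alpha_alphaAbs.Var)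
next
  case (Op delta inp binp)
  then show ?case
    by (intro alpha_alphaAbs.Op liftAll2_refl_on) (auto simp: liftAll_def)
next
  case (Abs xs x X)
  obtain y where "y \<noteq> x" "qFresh xs y X"
    using exists_fresh[of "{x}" "[X]"] Abs.prems by auto
  then show ?case
    using Abs by (intro alpha_alphaAbs.Abs[of y]) auto
qed

lemma alpha_qSwap_fresh:
  fixes X :: "('i, 'b, 'vs, 'v, 'o) qTerm" and A :: "('i, 'b, 'vs, 'v, 'o) qAbs"
  shows "qGood X \<Longrightarrow> qFresh zs y X \<Longrightarrow> qFresh zs z X \<Longrightarrow> alpha (qSwap zs z y X) X"
    and "qGoodAbs A \<Longrightarrow> qFreshAbs zs y A \<Longrightarrow> qFreshAbs zs z A \<Longrightarrow> alphaAbs (qSwapAbs zs z y A) A"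
proof (induction X and A rule: qTerm_qAbs_swap_induct)
  case (Var xs x)
  then show ?case by (auto simp: sw_def intro: alpha_alphaAbs.Var)
next
  case (Op delta inp binp)
  then show ?case
    by (simp, intro alpha_alphaAbs.Op liftAll2_map_option_self) (auto simp: liftAll_def)
next
  case (Abs xs x X)
  let ?s = "\<lambda>v. if xs = zs then sw v z y else v"
  obtain w where w: "w \<notin> {x, y, z}" "qFresh xs w X"
    using exists_fresh[of "{x, y, z}" "[X]"] Abs.prems(1) by auto
  have "alpha (qSwap zs z y (qSwap xs w x X)) (qSwap xs w x X)"
    using w Abs.prems by (intro Abs.IH) (auto simp: sw_def)
  then have "alpha (qSwap xs w (?s x) (qSwap zs z y X)) (qSwap xs w x X)"
    using qSwap_qSwap_sorts[of xs zs w z y x X] w by auto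
  then show ?case
    using w by (auto simp: sw_def intro!: alpha_alphaAbs.Abs[of w])
qed

lemma alpha_qSwap_rename:
  fixes X :: "('i, 'b, 'vs, 'v, 'o) qTerm"
  assumes "qGood X" and "x \<notin> {y, z}" and "qFresh xs y X" and "qFresh xs z X"
  shows "alpha (qSwap xs z y (qSwap xs y x X)) (qSwap xs z x X)"
proof -
  have "qSwap xs z y (qSwap xs y x X) = qSwap xs z x (qSwap xs z y X)"
    using qSwap_qSwap(1)[of xs z y y x X] assms(2) by simp
  then show ?thesis
    using alpha_qSwap(1)[OF alpha_qSwap_fresh(1)[OF assms(1,3,4)]] by simp
qed

text \<open>Transitivity is assumed only from \<open>t\<close>: in the proof of transitivity below, the induction
  hypothesis provides no more.\<close>

lemma alpha_change_fresh:
  fixes X X' :: "('i, 'b, 'vs, 'v, 'o) qTerm"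
  assumes trans_from_t: "\<And>Y Z. qGood Y \<Longrightarrow> qGood Z \<Longrightarrow> alpha t Y \<Longrightarrow> alpha Y Z \<Longrightarrow> alpha t Z"
    and good: "qGood X" "qGood X'"
    and t: "alpha t (qSwap xs z x X)"
    and y: "y \<notin> {x, x'}" "qFresh xs y X" "qFresh xs y X'"
    and alpha_y: "alpha (qSwap xs y x X) (qSwap xs y x' X')"
    and z: "z \<notin> {x, x'}" "qFresh xs z X" "qFresh xs z X'"
  shows "alpha t (qSwap xs z x' X')"
proof -
  have "alpha (qSwap xs z x X) (qSwap xs z y (qSwap xs y x X))"
    using alpha_qSwap_rename[OF good(1)] y z by (auto intro: alpha_sym)
  moreover have "alpha (qSwap xs z y (qSwap xs y x X)) (qSwap xs z y (qSwap xs y x' X'))"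
    using alpha_y by (rule alpha_qSwap)
  moreover have "alpha (qSwap xs z y (qSwap xs y x' X')) (qSwap xs z x' X')"
    using alpha_qSwap_rename[OF good(2)] y z by auto
  ultimately show ?thesis
    using t good by (meson trans_from_t qGood_qSwap(1))
qed

lemma alpha_trans:
  fixes X :: "('i, 'b, 'vs, 'v, 'o) qTerm" and A :: "('i, 'b, 'vs, 'v, 'o) qAbs"
  shows "qGood X \<Longrightarrow> qGood Y \<Longrightarrow> qGood Z \<Longrightarrow> alpha X Y \<Longrightarrow> alpha Y Z \<Longrightarrow> alpha X Z"
    and "qGoodAbs A \<Longrightarrow> qGoodAbs B \<Longrightarrow> qGoodAbs C \<Longrightarrow> alphaAbs A B \<Longrightarrow> alphaAbs B C \<Longrightarrow>
         alphaAbs A C"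
proof (induction X and A arbitrary: Y Z and B C rule: qTerm_qAbs_swap_induct)
  case (Var xs x)
  then show ?case by (simp add: alpha_qVar_iff)
next
  case (Op delta inp binp)
  obtain inp' binp' inp'' binp'' where Y: "Y = qOp delta inp' binp'"
    and Z: "Z = qOp delta inp'' binp''"
    and alpha_inp: "liftAll2 alpha inp inp'" "liftAll2 alpha inp' inp''"
    and alpha_binp: "liftAll2 alphaAbs binp binp'" "liftAll2 alphaAbs binp' binp''"
    using Op.prems(4,5) by (auto simp: alpha_qOp_iff)
  have good: "liftAll qGood inp" "liftAll qGood inp'" "liftAll qGood inp''"
    "liftAll qGoodAbs binp" "liftAll qGoodAbs binp'" "liftAll qGoodAbs binp''"
    using Op.prems(1-3) Y Z by auto
  show ?case
    unfolding Z
  proof (intro alpha_alphaAbs.Op)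
    show "liftAll2 alpha inp inp''"
      using good(1-3) Op.IH(1) by (intro liftAll2_trans_on[OF alpha_inp]) (unfold liftAll_def, blast)
    show "liftAll2 alphaAbs binp binp''"
      using good(4-6) Op.IH(2) by (intro liftAll2_trans_on[OF alpha_binp]) (unfold liftAll_def, blast)
  qed
next
  case (Abs xs x X)
  obtain x' X' where B: "B = qAbs xs x' X'"
    using Abs.prems(4) by (cases B) (auto simp: alphaAbs_qAbs_iff)
  obtain x'' X'' where C: "C = qAbs xs x'' X''"
    using Abs.prems(5) B by (cases C) (auto simp: alphaAbs_qAbs_iff)
  obtain y y' where y: "y \<notin> {x, x'}" "qFresh xs y X" "qFresh xs y X'"
    and alpha_y: "alpha (qSwap xs y x X) (qSwap xs y x' X')"
    and y': "y' \<notin> {x', x''}" "qFresh xs y' X'" "qFresh xs y' X''"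
    and alpha_y': "alpha (qSwap xs y' x' X') (qSwap xs y' x'' X'')"
    using Abs.prems(4,5) unfolding B C alphaAbs_qAbs_iff by auto
  have good: "qGood X" "qGood X'" "qGood X''" using Abs.prems(1-3) B C by auto
  obtain z where z: "z \<notin> {x, x', x''}" "qFresh xs z X" "qFresh xs z X'" "qFresh xs z X''"
    using exists_fresh[of "{x, x', x''}" "[X, X', X'']"] good by auto
  have trans_from: "alpha (qSwap xs z x X) W"
    if "qGood V" "qGood W" "alpha (qSwap xs z x X) V" "alpha V W" for V W
    by (rule Abs.IH) (use good that in simp_all)
  have "alpha (qSwap xs z x X) (qSwap xs z x X)"
    using alpha_refl(1)[of "qSwap xs z x X"] good by simp
  then have "alpha (qSwap xs z x X) (qSwap xs z x' X')"
    using alpha_change_fresh[OF trans_from good(1,2) _ y alpha_y] z by auto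
  then have "alpha (qSwap xs z x X) (qSwap xs z x'' X'')"
    using alpha_change_fresh[OF trans_from good(2,3) _ y' alpha_y'] z by auto
  then show ?case
    unfolding C using z by (auto intro: alpha_alphaAbs.Abs)
qed

lemma equiv_alpha:
  "equiv {X :: ('i, 'b, 'vs, 'v, 'o) qTerm. qGood X} {(X, Y). qGood X \<and> qGood Y \<and> alpha X Y}"
  by (intro equivI refl_onI symI transI) (auto intro: alpha_refl(1) alpha_sym(1) alpha_trans(1))

lemma equiv_alphaAbs:
  "equiv {A :: ('i, 'b, 'vs, 'v, 'o) qAbs. qGoodAbs A} {(A, B). qGoodAbs A \<and> qGoodAbs B \<and> alphaAbs A B}"
  by (intro equivI refl_onI symI transI) (auto intro: alpha_refl(2) alpha_sym(2) alpha_trans(2))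

lemma alphaAbs_qAbs_iff_swapsAll:
  fixes X X' :: "('i, 'b, 'vs, 'v, 'o) qTerm"
  assumes good: "qGood X" "qGood X'"
  shows "alphaAbs (qAbs xs x X) (qAbs xs x' X') \<longleftrightarrow> swapsAll alpha xs x X x' X'"
proof
  assume "alphaAbs (qAbs xs x X) (qAbs xs x' X')"
  then obtain y where y: "y \<notin> {x, x'}" "qFresh xs y X" "qFresh xs y X'"
    and alpha_y: "alpha (qSwap xs y x X) (qSwap xs y x' X')"
    by (auto simp: alphaAbs_qAbs_iff)
  show "swapsAll alpha xs x X x' X'"
    unfolding swapsAll_def
  proof (intro allI impI)
    fix z assume z: "z \<notin> {x, x'} \<and> qFresh xs z X \<and> qFresh xs z X'"
    have good_z: "qGood (qSwap xs z x X)" using good by simp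
    show "alpha (qSwap xs z x X) (qSwap xs z x' X')"
      using alpha_change_fresh[OF alpha_trans(1)[OF good_z] good alpha_refl(1)[OF good_z] y alpha_y]
        z by auto
  qed
next
  assume "swapsAll alpha xs x X x' X'"
  moreover obtain z where "z \<notin> {x, x'}" "qFresh xs z X" "qFresh xs z X'"
    using exists_fresh[of "{x, x'}" "[X, X']"] good by auto
  ultimately show "alphaAbs (qAbs xs x X) (qAbs xs x' X')"
    unfolding swapsAll_def by (auto intro: alpha_alphaAbs.Abs)
qed

lemma alphaAll_iff_alpha:
  fixes X :: "('i, 'b, 'vs, 'v, 'o) qTerm" and A :: "('i, 'b, 'vs, 'v, 'o) qAbs"
  shows "qGood X \<Longrightarrow> qGood Y \<Longrightarrow> alphaAll X Y \<longleftrightarrow> alpha X Y"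
    and "qGoodAbs A \<Longrightarrow> qGoodAbs B \<Longrightarrow> alphaAllAbs A B \<longleftrightarrow> alphaAbs A B"
proof (induction X and A arbitrary: Y and B rule: qTerm_qAbs_swap_induct)
  case (Var xs x)
  then show ?case by (simp add: alpha_qVar_iff alphaAll_qVar_iff)
next
  case (Op delta inp binp)
  show ?case
  proof (cases Y)
    case (qOp delta' inp' binp')
    have "liftAll2 alphaAll inp inp' = liftAll2 alpha inp inp'"
      "liftAll2 alphaAllAbs binp binp' = liftAll2 alphaAbs binp binp'"
      using Op qOp by (auto simp: liftAll_def intro!: liftAll2_cong_on)
    then show ?thesis
      using qOp by (simp add: alpha_qOp_iff alphaAll_qOp_iff)
  qed (simp add: alpha_qOp_iff alphaAll_qOp_iff)
next
  case (Abs xs x X)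
  obtain ys y Y where B: "B = qAbs ys y Y" by (cases B)
  have good: "qGood X" "qGood Y" using Abs.prems B by auto
  have "swapsAll alphaAll xs x X y Y = swapsAll alpha xs x X y Y"
    unfolding swapsAll_def using Abs.IH good by simp
  then show ?case
    using alphaAbs_qAbs_iff_swapsAll[OF good] B
    by (auto simp: alphaAllAbs_qAbs_iff alphaAbs_qAbs_iff)
qed

end

theorem proposition2:
  assumes "infinite (UNIV :: 'var set)" and "regularCard (card_of (UNIV :: 'var set))"
  shows "equiv {X :: ('index, 'bindex, 'varSort, 'var, 'opSym) qTerm. qGood X}
               {(X, Y). qGood X \<and> qGood Y \<and> alpha X Y}
       \<and> equiv {A :: ('index, 'bindex, 'varSort, 'var, 'opSym) qAbs. qGoodAbs A}
               {(A, B). qGoodAbs A \<and> qGoodAbs B \<and> alphaAbs A B}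
       \<and> (\<forall>X Y :: ('index, 'bindex, 'varSort, 'var, 'opSym) qTerm.
            qGood X \<and> qGood Y \<longrightarrow> (alphaAll X Y \<longleftrightarrow> alpha X Y))
       \<and> (\<forall>A B :: ('index, 'bindex, 'varSort, 'var, 'opSym) qAbs.
            qGoodAbs A \<and> qGoodAbs B \<longrightarrow> (alphaAllAbs A B \<longleftrightarrow> alphaAbs A B))"
  using equiv_alpha[OF assms] equiv_alphaAbs[OF assms] alphaAll_iff_alpha[OF assms] by blast

end
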